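(* Let $n\ge 3$ and let $g$ be a prime power such that $g\ge n$ if $g$ is even and $g\ge n+1$ if $g$ is odd. Then there exists a $\mathrm{TOC}_{g+1}(n,4,3)$.
   Context: $\mathcal{H}_q(n,w)$ is the set of all words of length $n$ over $\mathbb{Z}_q$ with exactly $w$ nonzero entries, with the Hamming distance. An $(n,d,w)_q$-code is a nonempty subset of $\mathcal{H}_q(n,w)$ in which any two distinct words have Hamming distance at least $d$; $A_q(n,d,w)$ is the maximum size of such a code and a code of this size is optimal. A $\mathrm{TOC}_q(n,d,w)$ is a partition of $\mathcal{H}_q(n,w)$ into mutually disjoint optimal $(n,d,w)_q$-codes. *)

theory Defs
  imports Main "HOL-Number_Theory.Prime_Powers" "HOL-Library.Disjoint_Sets"
begin

text \<open>Words of length n over Z_q are represented as functions nat => nat with values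
  in {0..<q} on positions 0..<n and value 0 outside (canonical representation).\<close>

definition Hq :: "nat \<Rightarrow> nat \<Rightarrow> nat \<Rightarrow> (nat \<Rightarrow> nat) set" where
  "Hq q n w = {x. (\<forall>i<n. x i < q) \<and> (\<forall>i\<ge>n. x i = 0) \<and> card {i. i < n \<and> x i \<noteq> 0} = w}"

definition hdist :: "nat \<Rightarrow> (nat \<Rightarrow> nat) \<Rightarrow> (nat \<Rightarrow> nat) \<Rightarrow> nat" where
  "hdist n x y = card {i. i < n \<and> x i \<noteq> y i}"

definition is_code :: "nat \<Rightarrow> nat \<Rightarrow> nat \<Rightarrow> nat \<Rightarrow> (nat \<Rightarrow> nat) set \<Rightarrow> bool" where
  "is_code q n d w C \<longleftrightarrow> C \<noteq> {} \<and> C \<subseteq> Hq q n w \<and>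
     (\<forall>x\<in>C. \<forall>y\<in>C. x \<noteq> y \<longrightarrow> d \<le> hdist n x y)"

definition Aq :: "nat \<Rightarrow> nat \<Rightarrow> nat \<Rightarrow> nat \<Rightarrow> nat" where
  "Aq q n d w = Max (card ` {C. is_code q n d w C})"

definition optimal_code :: "nat \<Rightarrow> nat \<Rightarrow> nat \<Rightarrow> nat \<Rightarrow> (nat \<Rightarrow> nat) set \<Rightarrow> bool" where
  "optimal_code q n d w C \<longleftrightarrow> is_code q n d w C \<and> card C = Aq q n d w"

definition TOC :: "nat \<Rightarrow> nat \<Rightarrow> nat \<Rightarrow> nat \<Rightarrow> (nat \<Rightarrow> nat) set set \<Rightarrow> bool" where
  "TOC q n d w P \<longleftrightarrow> partition_on (Hq q n w) P \<and> (\<forall>C\<in>P. optimal_code q n d w C)"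

end

theory Submission
  imports Defs "HOL-Number_Theory.Residues" "HOL-Algebra.Algebraic_Closure"
begin

text \<open>Let \<open>F\<close> be a field with \<open>g\<close> elements, obtained as the fixed points of
  \<open>x \<mapsto> x\<^sup>g\<close> in an algebraic closure of \<open>\<int>/p\<close>, and identify the positions
  \<open>0..<n\<close> and the nonzero symbols with elements of \<open>F\<close> through a bijection
  \<open>\<sigma> : {0..<g} \<rightarrow> F\<close>. For each \<open>(x, y, z) \<in> F\<^sup>3\<close> take the code whose word with
  support \<open>T\<close> has the entry \<open>x + \<sigma>(i) y + \<sigma>(i)\<^sup>2 z + \<sigma>((\<Sum>T - i) mod g)\<close> at \<open>i \<in> T\<close>.
  A quadratic is determined by its values at three points, so for fixed \<open>T\<close> the entries
  determine the coefficients, and by counting every word of support \<open>T\<close> occurs in exactly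
  one of the \<open>g\<^sup>3\<close> codes. Within one code, words whose supports share at most one
  position differ in at least four places; if the supports share two positions, the shift
  term differs there, because the two sums differ by the difference of the unshared
  positions. Since the distance exceeds the weight, the words of a code have distinct
  supports, so \<open>n choose 3\<close> is the optimal size, and every one of these codes attains it.\<close>

definition word_support :: "nat \<Rightarrow> (nat \<Rightarrow> nat) \<Rightarrow> nat set" where
  "word_support n x = {i. i < n \<and> x i \<noteq> 0}"

lemma finite_word_support [simp]: "finite (word_support n x)"
  by (simp add: word_support_def)

lemma word_support_subset: "word_support n x \<subseteq> {0..<n}"
  by (auto simp: word_support_def)

lemma card_word_support: "x \<in> Hq q n w \<Longrightarrow> card (word_support n x) = w"
  by (simp add: Hq_def word_support_def)

lemma hdist_eq_card_word_support:
  "hdist n x y = card (sym_diff (word_support n x) (word_support n y)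
     \<union> {i \<in> word_support n x \<inter> word_support n y. x i \<noteq> y i})"
  unfolding hdist_def word_support_def by (rule arg_cong[where f = card]) auto

lemma card_subsets_atLeastLessThan: "card {T. T \<subseteq> {0..<n} \<and> card T = w} = n choose w"
  by (simp add: n_subsets)

lemma finite_subsets_atLeastLessThan: "finite {T. T \<subseteq> {0..<n::nat} \<and> card T = w}"
  by (rule finite_subset[of _ "Pow {0..<n}"]) auto

lemma inj_on_word_support_code:
  assumes C: "is_code q n d w C" and wd: "w < d"
  shows "inj_on (word_support n) C"
proof (rule inj_onI, rule ccontr)
  fix x y
  assume x: "x \<in> C" and y: "y \<in> C" and eq: "word_support n x = word_support n y" and "x \<noteq> y"
  then have "d \<le> hdist n x y" using C by (simp add: is_code_def)
  also have "hdist n x y \<le> card (word_support n x)"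
    unfolding hdist_eq_card_word_support eq by (rule card_mono) auto
  also have "\<dots> = w" using x C card_word_support by (auto simp: is_code_def)
  finally show False using wd by simp
qed

lemma card_code_le_choose:
  assumes C: "is_code q n d w C" and wd: "w < d"
  shows "card C \<le> n choose w"
proof -
  have "card C = card (word_support n ` C)"
    using inj_on_word_support_code[OF C wd] by (simp add: card_image)
  also have "\<dots> \<le> card {T. T \<subseteq> {0..<n} \<and> card T = w}"
    using C word_support_subset card_word_support
    by (intro card_mono[OF finite_subsets_atLeastLessThan]) (auto simp: is_code_def)
  finally show ?thesis by (simp add: card_subsets_atLeastLessThan)
qed

lemma Aq_eq_choose:
  assumes C: "is_code q n d w C" and wd: "w < d" and card_C: "card C = n choose w"
  shows "Aq q n d w = n choose w"
  unfolding Aq_def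
proof (rule Max_eqI)
  show "finite (card ` {C. is_code q n d w C})"
    by (rule finite_subset[of _ "{..n choose w}"]) (auto dest: card_code_le_choose[OF _ wd])
  show "m \<le> n choose w" if "m \<in> card ` {C. is_code q n d w C}" for m
    using that card_code_le_choose[OF _ wd] by auto
  show "n choose w \<in> card ` {C. is_code q n d w C}"
    using C card_C by force
qed

lemma TOC_if_codes_of_card_choose:
  assumes "partition_on (Hq q n w) P" and "w < d"
    and "\<And>C. C \<in> P \<Longrightarrow> is_code q n d w C \<and> card C = n choose w"
  shows "TOC q n d w P"
  using assms Aq_eq_choose unfolding TOC_def optimal_code_def by metis

lemma hdist_weight_3_ge_4:
  assumes x: "x \<in> Hq q n 3" and y: "y \<in> Hq q n 3"
    and ne: "word_support n x \<noteq> word_support n y"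
    and differ: "card (word_support n x \<inter> word_support n y) = 2 \<Longrightarrow>
      \<forall>i \<in> word_support n x \<inter> word_support n y. x i \<noteq> y i"
  shows "4 \<le> hdist n x y"
proof -
  define T T' where "T = word_support n x" and "T' = word_support n y"
  define D where "D = {i \<in> T \<inter> T'. x i \<noteq> y i}"
  have card_T: "card T = 3" "card T' = 3"
    using x y by (simp_all add: T_def T'_def card_word_support)
  have fin: "finite T" "finite T'" by (simp_all add: T_def T'_def)
  have "card (T \<inter> T') \<noteq> 3"
  proof
    assume "card (T \<inter> T') = 3"
    then have "T \<inter> T' = T" "T \<inter> T' = T'"
      using card_subset_eq[OF fin(1), of "T \<inter> T'"] card_subset_eq[OF fin(2), of "T \<inter> T'"] card_T
      by auto
    then show False using ne by (simp add: T_def T'_def)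
  qed
  moreover have "card (T \<inter> T') \<le> 3"
    using card_mono[OF fin(1), of "T \<inter> T'"] card_T by auto
  moreover have "card (T - T') = 3 - card (T \<inter> T')" "card (T' - T) = 3 - card (T \<inter> T')"
    using card_Diff_subset_Int[of T T'] card_Diff_subset_Int[of T' T] fin card_T
    by (simp_all add: Int_commute)
  moreover have "card D = 2" if "card (T \<inter> T') = 2"
  proof -
    have "D = T \<inter> T'" using differ that by (auto simp: D_def T_def T'_def)
    then show ?thesis using that by simp
  qed
  moreover have "hdist n x y = card (T - T') + card (T' - T) + card D"
  proof -
    have "hdist n x y = card (sym_diff T T' \<union> D)"
      by (simp add: hdist_eq_card_word_support T_def T'_def D_def)
    also have "\<dots> = card (sym_diff T T') + card D"
      using fin by (intro card_Un_disjoint) (auto simp: D_def)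
    also have "card (sym_diff T T') = card (T - T') + card (T' - T)"
      using fin by (intro card_Un_disjoint) auto
    finally show ?thesis .
  qed
  ultimately show ?thesis by (cases "card (T \<inter> T') = 2") auto
qed

lemma (in cring) binomial_expansion:
  assumes a: "a \<in> carrier R" and b: "b \<in> carrier R"
  shows "(a \<oplus> b) [^] (n::nat) = (\<Oplus>i\<in>{..n}. [(n choose i)] \<cdot> (a [^] i \<otimes> b [^] (n - i)))"
proof (induction n)
  case 0
  then show ?case using a b by simp
next
  case (Suc n)
  define t where "t = (\<lambda>n i. [(n choose i)] \<cdot> (a [^] i \<otimes> b [^] (n - i)))"
  define u where "u = (\<lambda>i. [(n choose i)] \<cdot> (a [^] i \<otimes> b [^] (Suc n - i)))"
  define v where "v = (\<lambda>i. [(n choose Suc i)] \<cdot> (a [^] Suc i \<otimes> b [^] (n - i)))"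
  define w where "w = (\<lambda>i. [(n choose i)] \<cdot> (a [^] Suc i \<otimes> b [^] (n - i)))"
  have tc: "t m \<in> A \<rightarrow> carrier R" for m A using a b by (auto simp: t_def)
  have uc: "u \<in> A \<rightarrow> carrier R" for A using a b by (auto simp: u_def)
  have vc: "v \<in> A \<rightarrow> carrier R" for A using a b by (auto simp: v_def)
  have wc: "w \<in> A \<rightarrow> carrier R" for A using a b by (auto simp: w_def)
  have "(a \<oplus> b) [^] Suc n = (\<Oplus>i\<in>{..n}. t n i) \<otimes> (a \<oplus> b)"
    using Suc a b by (simp add: t_def)
  also have "\<dots> = (\<Oplus>i\<in>{..n}. t n i \<otimes> a) \<oplus> (\<Oplus>i\<in>{..n}. t n i \<otimes> b)"
    using a b tc by (simp add: r_distr finsum_closed finsum_ldistr)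
  also have "(\<Oplus>i\<in>{..n}. t n i \<otimes> a) = (\<Oplus>i\<in>{..n}. w i)"
    using a b by (intro finsum_cong)
      (auto simp: t_def w_def add_pow_ldistr m_assoc nat_pow_Suc2 m_comm[OF nat_pow_closed[OF b] a])
  also have "(\<Oplus>i\<in>{..n}. t n i \<otimes> b) = (\<Oplus>i\<in>{..n}. u i)"
    using a b by (intro finsum_cong) (auto simp: t_def u_def add_pow_ldistr m_assoc Suc_diff_le nat_pow_Suc2)
  also have "(\<Oplus>i\<in>{..n}. u i) = (\<Oplus>i\<in>{..Suc n}. u i)"
  proof -
    have "u (Suc n) = \<zero>" by (simp add: u_def binomial_eq_0 add_pow_def)
    then show ?thesis using uc[of "{..Suc n}"] uc[of "{..n}"] by (simp add: finsum_closed)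
  qed
  also have "\<dots> = (\<Oplus>i\<in>{..n}. v i) \<oplus> u 0"
    using uc by (subst finsum_Suc2) (auto simp: u_def v_def intro!: finsum_cong')
  finally have lhs: "(a \<oplus> b) [^] Suc n = (\<Oplus>i\<in>{..n}. w i) \<oplus> ((\<Oplus>i\<in>{..n}. v i) \<oplus> u 0)" .
  have "(\<Oplus>i\<in>{..Suc n}. t (Suc n) i) = (\<Oplus>i\<in>{..n}. t (Suc n) (Suc i)) \<oplus> t (Suc n) 0"
    using tc by (subst finsum_Suc2) auto
  also have "(\<Oplus>i\<in>{..n}. t (Suc n) (Suc i)) = (\<Oplus>i\<in>{..n}. w i \<oplus> v i)"
    using a b by (intro finsum_cong) (auto simp: t_def w_def v_def add.nat_pow_mult)
  also have "\<dots> = (\<Oplus>i\<in>{..n}. w i) \<oplus> (\<Oplus>i\<in>{..n}. v i)"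
    using wc vc by (simp add: finsum_addf)
  also have "t (Suc n) 0 = u 0" by (simp add: t_def u_def)
  finally have rhs: "(\<Oplus>i\<in>{..Suc n}. t (Suc n) i) = (\<Oplus>i\<in>{..n}. w i) \<oplus> (\<Oplus>i\<in>{..n}. v i) \<oplus> u 0" .
  have "u 0 \<in> carrier R" using uc by auto
  then show ?case unfolding lhs using rhs wc vc by (simp add: t_def a_assoc finsum_closed)
qed

lemma (in cring) add_pow_eq_zero_if_char_dvd:
  assumes char: "[(p::nat)] \<cdot> \<one> = \<zero>" and x: "x \<in> carrier R" and dvd: "p dvd m"
  shows "[m] \<cdot> x = \<zero>"
proof -
  obtain k where m: "m = p * k" using dvd by auto
  have "[p] \<cdot> x = \<zero>"
    using add_pow_ldistr[of \<one> x p] char x by simp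
  then have "[k] \<cdot> ([p] \<cdot> x) = \<zero>" by simp
  then show ?thesis using m x by (simp add: add.nat_pow_pow)
qed

lemma (in cring) frobenius_add:
  assumes p: "Factorial_Ring.prime p" and char: "[(p::nat)] \<cdot> \<one> = \<zero>"
    and a: "a \<in> carrier R" and b: "b \<in> carrier R"
  shows "(a \<oplus> b) [^] p = a [^] p \<oplus> b [^] p"
proof -
  define t where "t = (\<lambda>i. [(p choose i)] \<cdot> (a [^] i \<otimes> b [^] (p - i)))"
  have tc: "t \<in> A \<rightarrow> carrier R" for A using a b by (auto simp: t_def)
  have "(a \<oplus> b) [^] p = (\<Oplus>i\<in>{..p}. t i)"
    unfolding t_def by (rule binomial_expansion[OF a b])
  also have "\<dots> = (\<Oplus>i\<in>{0, p}. t i)"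
  proof (rule add.finprod_mono_neutral_cong_right)
    show "t i = \<zero>" if "i \<in> {..p} - {0, p}" for i
    proof -
      from that have "0 < i" "i < p" by auto
      then have "p dvd (p choose i)" using dvd_choose_prime[of i p] p by auto
      then show ?thesis unfolding t_def using add_pow_eq_zero_if_char_dvd[OF char] a b by auto
    qed
  qed (use tc in auto)
  also have "\<dots> = a [^] p \<oplus> b [^] p"
    using tc[of "{0, p}"] tc[of "{p}"] p a b by (subst finsum_insert) (auto simp: t_def a_comm)
  finally show ?thesis .
qed

lemma (in cring) frobenius_pow_add:
  assumes p: "Factorial_Ring.prime p" and char: "[(p::nat)] \<cdot> \<one> = \<zero>"
    and a: "a \<in> carrier R" and b: "b \<in> carrier R"
  shows "(a \<oplus> b) [^] (p ^ k) = a [^] (p ^ k) \<oplus> b [^] (p ^ k)"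
proof (induction k)
  case 0
  then show ?case using a b by simp
next
  case (Suc k)
  have "(a \<oplus> b) [^] (p ^ Suc k) = ((a \<oplus> b) [^] (p ^ k)) [^] p"
    using a b by (simp add: nat_pow_pow mult.commute)
  also have "\<dots> = (a [^] (p ^ k)) [^] p \<oplus> (b [^] (p ^ k)) [^] p"
    using Suc frobenius_add[OF p char] a b by simp
  also have "\<dots> = a [^] (p ^ Suc k) \<oplus> b [^] (p ^ Suc k)"
    using a b by (simp add: nat_pow_pow mult.commute)
  finally show ?case .
qed

lemma ring_hom_add_pow:
  assumes "h \<in> ring_hom A B" "ring A" "ring B" "x \<in> carrier A"
  shows "h ([(n::nat)] \<cdot>\<^bsub>A\<^esub> x) = [n] \<cdot>\<^bsub>B\<^esub> (h x)"
proof -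
  interpret ring_hom_ring A B h using assms by (intro ring_hom_ringI2) auto
  show ?thesis
    by (induction n) (use assms(4) in \<open>auto simp: R.add.nat_pow_Suc\<close>)
qed

lemma residue_ring_char:
  assumes "Factorial_Ring.prime (p::nat)"
  shows "[p] \<cdot>\<^bsub>residue_ring (int p)\<^esub> \<one>\<^bsub>residue_ring (int p)\<^esub> = \<zero>\<^bsub>residue_ring (int p)\<^esub>"
proof -
  define R where "R = residue_ring (int p)"
  interpret residues_prime p R using assms by unfold_locales (auto simp: R_def)
  have "[n] \<cdot>\<^bsub>R\<^esub> \<one>\<^bsub>R\<^esub> = int n mod int p" for n :: nat
  proof (induction n)
    case 0
    then show ?case by (simp add: res_zero_eq)
  next
    case (Suc n)
    have "[Suc n] \<cdot>\<^bsub>R\<^esub> \<one>\<^bsub>R\<^esub> = [n] \<cdot>\<^bsub>R\<^esub> \<one>\<^bsub>R\<^esub> \<oplus>\<^bsub>R\<^esub> \<one>\<^bsub>R\<^esub>"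
      by (simp add: add.nat_pow_Suc)
    also have "\<dots> = (int n mod int p + 1) mod int p"
      using Suc by (simp add: res_add_eq res_one_eq)
    also have "\<dots> = int (Suc n) mod int p"
      by (metis mod_add_left_eq of_nat_Suc add.commute)
    finally show ?case .
  qed
  from this[of p] show ?thesis by (simp add: res_zero_eq flip: R_def)
qed

lemma (in domain) poly_ring_char:
  assumes char: "[(p::nat)] \<cdot> \<one> = \<zero>"
  shows "[p] \<cdot>\<^bsub>poly_ring R\<^esub> \<one>\<^bsub>poly_ring R\<^esub> = \<zero>\<^bsub>poly_ring R\<^esub>"
proof -
  interpret P: domain "poly_ring R"
    using univ_poly_is_domain[OF carrier_is_subring] .
  interpret H: ring_hom_ring R "poly_ring R" poly_of_const
    using canonical_embedding_ring_hom[OF carrier_is_subring] by simp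
  have "poly_of_const ([p] \<cdot> \<one>) = [p] \<cdot>\<^bsub>poly_ring R\<^esub> poly_of_const \<one>"
    using ring_hom_add_pow[OF H.homh] ring_axioms P.ring_axioms by simp
  then show ?thesis using char by simp
qed

lemma (in field) frobenius_fixed_points_subfield:
  assumes p: "Factorial_Ring.prime p" and char: "[(p::nat)] \<cdot> \<one> = \<zero>"
  shows "subfield {x \<in> carrier R. x [^] (p ^ k) = x} R"
proof (rule subfieldI'[OF subringI])
  let ?q = "p ^ k"
  have q_pos: "?q \<noteq> 0" using p by (simp add: prime_gt_0_nat)
  show "\<ominus> h \<in> {x \<in> carrier R. x [^] ?q = x}" if "h \<in> {x \<in> carrier R. x [^] ?q = x}" for h
  proof -
    have h: "h \<in> carrier R" "h [^] ?q = h" using that by auto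
    have "\<zero> = (h \<oplus> \<ominus> h) [^] ?q" using h q_pos by (simp add: r_neg nat_pow_zero)
    also have "\<dots> = h \<oplus> (\<ominus> h) [^] ?q" using frobenius_pow_add[OF p char] h by simp
    finally have "\<ominus> h = (\<ominus> h) [^] ?q" using h by (intro minus_equality) (auto simp: a_comm)
    then show ?thesis using h by simp
  qed
  show "inv h \<in> {x \<in> carrier R. x [^] ?q = x}" if "h \<in> {x \<in> carrier R. x [^] ?q = x} - {\<zero>}" for h
  proof -
    have h: "h \<in> carrier R" "h [^] ?q = h" "h \<noteq> \<zero>" using that by auto
    then have inv_h: "inv h \<in> carrier R" "h \<otimes> inv h = \<one>"
      by (simp_all add: field_Units)
    have "h \<otimes> inv h [^] ?q = h [^] ?q \<otimes> inv h [^] ?q" using h by simp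
    also have "\<dots> = (h \<otimes> inv h) [^] ?q" by (rule nat_pow_distrib[OF h(1) inv_h(1), symmetric])
    also have "\<dots> = \<one>" using inv_h(2) by simp
    finally have "h \<otimes> inv h [^] ?q = \<one>" .
    then have "inv h = inv h [^] ?q" using h inv_h by (intro comm_inv_char) auto
    then show ?thesis using inv_h by simp
  qed
qed (auto simp: frobenius_pow_add[OF p char] nat_pow_distrib)

lemma prime_power_ge_2:
  assumes "Factorial_Ring.prime (p::nat)" and "0 < k"
  shows "2 \<le> p ^ k"
proof -
  have "2 \<le> p" using assms(1) by (rule prime_ge_2_nat)
  also have "p \<le> p ^ k" using \<open>2 \<le> p\<close> assms(2) by (simp add: self_le_power)
  finally show ?thesis .
qed

definition (in ring) frobenius_poly :: "nat \<Rightarrow> 'a list"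
  where "frobenius_poly q = X [^]\<^bsub>poly_ring R\<^esub> q \<ominus>\<^bsub>poly_ring R\<^esub> X"

context domain
begin

lemma frobenius_poly_carrier: "frobenius_poly q \<in> carrier (poly_ring R)"
proof -
  interpret P: domain "poly_ring R"
    using univ_poly_is_domain[OF carrier_is_subring] .
  show ?thesis using var_closed(1)[OF carrier_is_subring] by (simp add: frobenius_poly_def)
qed

lemma eval_frobenius_poly:
  assumes x: "x \<in> carrier R"
  shows "eval (frobenius_poly q) x = x [^] q \<ominus> x"
proof -
  interpret E: ring_hom_ring "poly_ring R" R "\<lambda>p. eval p x"
    using eval_ring_hom[OF carrier_is_subring x] .
  show ?thesis
    using var_closed(1)[OF carrier_is_subring] x
    by (simp add: frobenius_poly_def E.hom_nat_pow eval_var a_minus_def)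
qed

lemma degree_frobenius_poly:
  assumes q: "2 \<le> q"
  shows "degree (frobenius_poly q) = q"
proof -
  interpret P: domain "poly_ring R"
    using univ_poly_is_domain[OF carrier_is_subring] .
  have X: "X \<in> carrier (poly_ring R)" using var_closed(1)[OF carrier_is_subring] .
  have monom: "polynomial (carrier R) (monom \<one> q)"
    using monom_is_polynomial[OF carrier_is_subring, of \<one> q] by auto
  have neg_X: "polynomial (carrier R) (\<ominus>\<^bsub>poly_ring R\<^esub> X)"
    using P.a_inv_closed[OF X] univ_poly_carrier by blast
  have degree_neg_X: "degree (\<ominus>\<^bsub>poly_ring R\<^esub> X) = 1"
    using univ_poly_a_inv_degree[OF carrier_is_subring X] by (simp add: var_def)
  have "frobenius_poly q = poly_add (monom \<one> q) (\<ominus>\<^bsub>poly_ring R\<^esub> X)"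
    using unitary_monom_eq_var_pow[OF carrier_is_subring]
    by (simp add: frobenius_poly_def a_minus_def univ_poly_add)
  also have "degree \<dots> = max (degree (monom \<one> q)) (degree (\<ominus>\<^bsub>poly_ring R\<^esub> X))"
    using poly_add_degree_eq[OF carrier_is_subring monom neg_X] degree_neg_X q
    by (simp add: monom_def)
  finally show ?thesis using degree_neg_X q by (simp add: monom_def)
qed

lemma frobenius_poly_shift:
  assumes p: "Factorial_Ring.prime p" and char: "[(p::nat)] \<cdot> \<one> = \<zero>"
    and a: "a \<in> carrier R" and fixed: "a [^] (p ^ k) = a"
  shows "frobenius_poly (p ^ k) =
    [\<one>, \<ominus> a] [^]\<^bsub>poly_ring R\<^esub> (p ^ k) \<ominus>\<^bsub>poly_ring R\<^esub> [\<one>, \<ominus> a]"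
proof -
  interpret P: domain "poly_ring R"
    using univ_poly_is_domain[OF carrier_is_subring] .
  interpret H: ring_hom_ring R "poly_ring R" poly_of_const
    using canonical_embedding_ring_hom[OF carrier_is_subring] by simp
  define Y where "Y = [\<one>, \<ominus> a]"
  define c where "c = poly_of_const a"
  have Y: "Y \<in> carrier (poly_ring R)"
    using a unfolding Y_def sym[OF univ_poly_carrier] polynomial_def by auto
  have c: "c \<in> carrier (poly_ring R)" using a by (simp add: c_def)
  have X: "Y \<oplus>\<^bsub>poly_ring R\<^esub> c = X"
    using a by (cases "a = \<zero>")
      (simp_all add: Y_def c_def poly_of_const_def var_def univ_poly_add l_neg)
  have "c [^]\<^bsub>poly_ring R\<^esub> (p ^ k) = c"
    using H.hom_nat_pow[OF a, of "p ^ k"] fixed by (simp add: c_def)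
  then have "X [^]\<^bsub>poly_ring R\<^esub> (p ^ k) = Y [^]\<^bsub>poly_ring R\<^esub> (p ^ k) \<oplus>\<^bsub>poly_ring R\<^esub> c"
    using P.frobenius_pow_add[OF p poly_ring_char[OF char] Y c, of k] X by simp
  then have "frobenius_poly (p ^ k) =
      (Y [^]\<^bsub>poly_ring R\<^esub> (p ^ k) \<oplus>\<^bsub>poly_ring R\<^esub> c) \<ominus>\<^bsub>poly_ring R\<^esub> (Y \<oplus>\<^bsub>poly_ring R\<^esub> c)"
    by (simp add: frobenius_poly_def X)
  also have "\<dots> = Y [^]\<^bsub>poly_ring R\<^esub> (p ^ k) \<ominus>\<^bsub>poly_ring R\<^esub> Y"
    using P.nat_pow_closed[OF Y] Y c by algebra
  finally show ?thesis by (simp only: Y_def)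
qed

lemma linear_factor_pow_minus_one_not_multiple:
  assumes a: "a \<in> carrier R" and m: "0 < (m::nat)" and h: "h \<in> carrier (poly_ring R)"
  shows "[\<one>, \<ominus> a] [^]\<^bsub>poly_ring R\<^esub> m \<ominus>\<^bsub>poly_ring R\<^esub> \<one>\<^bsub>poly_ring R\<^esub> \<noteq>
    [\<one>, \<ominus> a] \<otimes>\<^bsub>poly_ring R\<^esub> h"
proof
  interpret P: domain "poly_ring R"
    using univ_poly_is_domain[OF carrier_is_subring] .
  interpret E: ring_hom_ring "poly_ring R" R "\<lambda>f. eval f a"
    using eval_ring_hom[OF carrier_is_subring a] .
  define Y where "Y = [\<one>, \<ominus> a]"
  have Y: "Y \<in> carrier (poly_ring R)"
    using a unfolding Y_def sym[OF univ_poly_carrier] polynomial_def by auto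
  have eval_Y: "eval Y a = \<zero>"
    using monic_degree_one_root_condition[OF a, of a] a by (simp add: Y_def is_root_def r_neg)
  assume "[\<one>, \<ominus> a] [^]\<^bsub>poly_ring R\<^esub> m \<ominus>\<^bsub>poly_ring R\<^esub> \<one>\<^bsub>poly_ring R\<^esub> =
    [\<one>, \<ominus> a] \<otimes>\<^bsub>poly_ring R\<^esub> h"
  then have "eval (Y [^]\<^bsub>poly_ring R\<^esub> m \<ominus>\<^bsub>poly_ring R\<^esub> \<one>\<^bsub>poly_ring R\<^esub>) a =
    eval (Y \<otimes>\<^bsub>poly_ring R\<^esub> h) a"
    unfolding Y_def by simp
  moreover have "eval (Y [^]\<^bsub>poly_ring R\<^esub> m) a = \<zero>"
    using eval_Y E.hom_nat_pow[OF Y, of m] m by (simp add: nat_pow_zero)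
  ultimately have "\<ominus> \<one> = \<zero>"
    using eval_Y Y h P.nat_pow_closed[OF Y, of m]
    by (simp add: E.hom_add E.hom_mult E.hom_a_inv a_minus_def)
  then show False by simp
qed

lemma alg_mult_frobenius_poly_le_1:
  assumes p: "Factorial_Ring.prime p" and char: "[(p::nat)] \<cdot> \<one> = \<zero>"
    and k: "0 < k" and a: "a \<in> carrier R"
  shows "alg_mult (frobenius_poly (p ^ k)) a \<le> 1"
proof (rule ccontr)
  interpret P: domain "poly_ring R"
    using univ_poly_is_domain[OF carrier_is_subring] .
  define q where "q = p ^ k"
  define f where "f = frobenius_poly q"
  define Y where "Y = [\<one>, \<ominus> a]"
  have q: "2 \<le> q"
    using prime_power_ge_2[OF p k] by (simp add: q_def)
  have f: "f \<in> carrier (poly_ring R)" by (simp add: f_def frobenius_poly_carrier)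
  have Y: "Y \<in> carrier (poly_ring R)" "Y \<noteq> \<zero>\<^bsub>poly_ring R\<^esub>"
    using a unfolding Y_def sym[OF univ_poly_carrier] polynomial_def by (auto simp: univ_poly_zero)
  assume "\<not> alg_mult f a \<le> 1"
  then have mult: "2 \<le> alg_mult f a" by (simp add: f_def q_def)
  then obtain h where h: "h \<in> carrier (poly_ring R)"
    and f_eq: "f = (Y [^]\<^bsub>poly_ring R\<^esub> (2::nat)) \<otimes>\<^bsub>poly_ring R\<^esub> h"
    using le_alg_mult_imp_pdivides[OF a f] unfolding pdivides_def factor_def Y_def by auto
  have "is_root f a"
    using alg_mult_gt_zero_iff_is_root[OF f, of a] mult by linarith
  then have "a [^] q = a" using a by (simp add: f_def eval_frobenius_poly is_root_def)
  define W where "W = Y [^]\<^bsub>poly_ring R\<^esub> (q - 1)"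
  have W: "W \<in> carrier (poly_ring R)" using Y by (simp add: W_def)
  have "Y [^]\<^bsub>poly_ring R\<^esub> q = Y \<otimes>\<^bsub>poly_ring R\<^esub> W"
    using Y(1) q P.nat_pow_Suc2[of Y "q - 1"] by (simp add: W_def)
  moreover have "f = Y [^]\<^bsub>poly_ring R\<^esub> q \<ominus>\<^bsub>poly_ring R\<^esub> Y"
    using frobenius_poly_shift[OF p char a] \<open>a [^] q = a\<close> by (simp add: f_def q_def Y_def)
  ultimately have "f = Y \<otimes>\<^bsub>poly_ring R\<^esub> (W \<ominus>\<^bsub>poly_ring R\<^esub> \<one>\<^bsub>poly_ring R\<^esub>)"
    using Y W by (simp add: P.r_distr P.r_minus a_minus_def)
  moreover have "f = Y \<otimes>\<^bsub>poly_ring R\<^esub> (Y \<otimes>\<^bsub>poly_ring R\<^esub> h)"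
    using f_eq Y h by (simp add: numeral_2_eq_2 P.m_assoc)
  ultimately have "W \<ominus>\<^bsub>poly_ring R\<^esub> \<one>\<^bsub>poly_ring R\<^esub> = Y \<otimes>\<^bsub>poly_ring R\<^esub> h"
    using P.m_lcancel[OF Y(2) Y(1)] Y W h by simp
  then show False
    using linear_factor_pow_minus_one_not_multiple[OF a _ h, of "q - 1"] q
    by (simp add: W_def Y_def)
qed

lemma roots_frobenius_poly:
  assumes "2 \<le> q"
  shows "set_mset (roots (frobenius_poly q)) = {x \<in> carrier R. x [^] q = x}"
proof -
  have "frobenius_poly q \<noteq> []" using degree_frobenius_poly[OF assms] assms by auto
  then show ?thesis
    using roots_mem_iff_is_root[OF frobenius_poly_carrier] eval_frobenius_poly
    by (auto simp: is_root_def r_right_minus_eq eq_commute[of "\<zero>"])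
qed

end

lemma (in algebraically_closed) card_frobenius_fixed_points:
  assumes p: "Factorial_Ring.prime p" and char: "[(p::nat)] \<cdot> \<one> = \<zero>" and k: "0 < k"
  shows "card {x \<in> carrier L. x [^] (p ^ k) = x} = p ^ k"
proof -
  define q where "q = p ^ k"
  define f where "f = frobenius_poly q"
  have q: "2 \<le> q"
    using prime_power_ge_2[OF p k] by (simp add: q_def)
  have f: "f \<in> carrier (poly_ring L)" by (simp add: f_def frobenius_poly_carrier)
  have simple: "count (roots f) x = 1" if "x \<in># roots f" for x
  proof -
    have "x \<in> carrier L" using that roots_frobenius_poly[OF q] by (auto simp: f_def)
    then have "count (roots f) x \<le> 1"
      using alg_mult_frobenius_poly_le_1[OF p char k] alg_mult_eq_count_roots[OF f]
      by (metis f_def q_def)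
    then show ?thesis using that by (simp add: Suc_le_eq antisym)
  qed
  have "q = size (roots f)"
    using roots_over_carrier[OF f] degree_frobenius_poly[OF q] by (simp add: f_def splitted_def)
  also have "\<dots> = (\<Sum>x\<in>set_mset (roots f). count (roots f) x)"
    by (rule size_multiset_overloaded_eq)
  also have "\<dots> = card (set_mset (roots f))" using simple by simp
  finally show ?thesis using roots_frobenius_poly[OF q] by (simp add: f_def q_def)
qed

lemma finite_field_exists:
  assumes p: "Factorial_Ring.prime p" and k: "0 < k"
  shows "\<exists>F :: ((int list \<times> nat) multiset \<Rightarrow> int) ring. field F \<and> card (carrier F) = p ^ k"
proof -
  define R where "R = residue_ring (int p)"
  interpret residues_prime p R using p by unfold_locales (auto simp: R_def)
  define L where "L = alg_closure"
  interpret L: algebraic_closure L "indexed_const ` carrier R"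
    using alg_closureE(1) unfolding L_def .
  have hom: "indexed_const \<in> ring_hom R L" using alg_closureE(2) by (simp add: L_def)
  have "indexed_const ([p] \<cdot>\<^bsub>R\<^esub> \<one>\<^bsub>R\<^esub>) = [p] \<cdot>\<^bsub>L\<^esub> indexed_const \<one>\<^bsub>R\<^esub>"
    using ring_hom_add_pow[OF hom] ring_axioms L.ring_axioms by simp
  then have char: "[p] \<cdot>\<^bsub>L\<^esub> \<one>\<^bsub>L\<^esub> = \<zero>\<^bsub>L\<^esub>"
    using residue_ring_char[OF p] hom ring_hom_zero[OF hom ring_axioms L.ring_axioms]
    by (simp add: ring_hom_one R_def)
  define S where "S = {x \<in> carrier L. x [^]\<^bsub>L\<^esub> (p ^ k) = x}"
  have "field (L\<lparr>carrier := S\<rparr>)"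
    using L.subfield_iff(2)[OF L.frobenius_fixed_points_subfield[OF p char]] by (simp add: S_def)
  moreover have "card (carrier (L\<lparr>carrier := S\<rparr>)) = p ^ k"
    using L.card_frobenius_fixed_points[OF p char k] by (simp add: S_def)
  ultimately show ?thesis by blast
qed

definition (in ring) quad_eval :: "'a \<times> 'a \<times> 'a \<Rightarrow> 'a \<Rightarrow> 'a" where
  "quad_eval c a = (case c of (x, y, z) \<Rightarrow> x \<oplus> a \<otimes> y \<oplus> a \<otimes> a \<otimes> z)"

lemma (in field) quadratic_zero_at_three_points:
  assumes uvw: "u \<in> carrier R" "v \<in> carrier R" "w \<in> carrier R"
    and a: "a1 \<in> carrier R" "a2 \<in> carrier R" "a3 \<in> carrier R"
    and distinct: "a1 \<noteq> a2" "a1 \<noteq> a3" "a2 \<noteq> a3"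
    and zero: "\<And>a. a \<in> {a1, a2, a3} \<Longrightarrow> u \<oplus> a \<otimes> v \<oplus> a \<otimes> a \<otimes> w = \<zero>"
  shows "u = \<zero> \<and> v = \<zero> \<and> w = \<zero>"
proof -
  have slope: "v \<oplus> (a1 \<oplus> b) \<otimes> w = \<zero>" if "b \<in> {a2, a3}" for b
  proof -
    have b: "b \<in> carrier R" "a1 \<ominus> b \<noteq> \<zero>" using that a distinct by auto
    have "(a1 \<ominus> b) \<otimes> (v \<oplus> (a1 \<oplus> b) \<otimes> w) =
        (u \<oplus> a1 \<otimes> v \<oplus> a1 \<otimes> a1 \<otimes> w) \<ominus> (u \<oplus> b \<otimes> v \<oplus> b \<otimes> b \<otimes> w)"
      using uvw a b by algebra
    also have "\<dots> = \<zero>" using zero[of a1] zero[of b] that by simp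
    finally show ?thesis using integral b uvw a by blast
  qed
  have "(a2 \<ominus> a3) \<otimes> w = (v \<oplus> (a1 \<oplus> a2) \<otimes> w) \<ominus> (v \<oplus> (a1 \<oplus> a3) \<otimes> w)"
    using uvw a by algebra
  also have "\<dots> = \<zero>" using slope[of a2] slope[of a3] by simp
  finally have "w = \<zero>" using integral[of "a2 \<ominus> a3" w] a distinct uvw by auto
  moreover from this have "v = \<zero>" using slope[of a2] uvw a by simp
  moreover from calculation have "u = \<zero>" using zero[of a1] uvw a by simp
  ultimately show ?thesis by simp
qed

lemma (in field) quad_eval_inj:
  assumes c: "c \<in> carrier R \<times> carrier R \<times> carrier R" and c': "c' \<in> carrier R \<times> carrier R \<times> carrier R"
    and A: "A \<subseteq> carrier R" "card A = 3"
    and eq: "\<And>a. a \<in> A \<Longrightarrow> quad_eval c a = quad_eval c' a"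
  shows "c = c'"
proof -
  obtain x y z x' y' z' where xyz: "c = (x, y, z)" "c' = (x', y', z')" by (cases c, cases c') auto
  have carrier: "x \<in> carrier R" "y \<in> carrier R" "z \<in> carrier R"
    "x' \<in> carrier R" "y' \<in> carrier R" "z' \<in> carrier R"
    using c c' xyz by auto
  obtain a1 a2 a3 where A_eq: "A = {a1, a2, a3}" and distinct: "a1 \<noteq> a2" "a1 \<noteq> a3" "a2 \<noteq> a3"
    using A(2) by (auto simp: card_3_iff)
  have diff_zero: "(x \<ominus> x') \<oplus> a \<otimes> (y \<ominus> y') \<oplus> a \<otimes> a \<otimes> (z \<ominus> z') = \<zero>" if "a \<in> A" for a
  proof -
    have a: "a \<in> carrier R" using A(1) that by auto
    have "(x \<ominus> x') \<oplus> a \<otimes> (y \<ominus> y') \<oplus> a \<otimes> a \<otimes> (z \<ominus> z') =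
        (x \<oplus> a \<otimes> y \<oplus> a \<otimes> a \<otimes> z) \<ominus> (x' \<oplus> a \<otimes> y' \<oplus> a \<otimes> a \<otimes> z')"
      using carrier a by algebra
    also have "\<dots> = quad_eval c a \<ominus> quad_eval c' a" by (simp add: quad_eval_def xyz)
    also have "\<dots> = \<zero>"
      using eq[OF that] carrier a by (simp add: quad_eval_def xyz r_right_minus_eq)
    finally show ?thesis .
  qed
  have "x \<ominus> x' = \<zero> \<and> y \<ominus> y' = \<zero> \<and> z \<ominus> z' = \<zero>"
    by (rule quadratic_zero_at_three_points[of _ _ _ a1 a2 a3])
      (use carrier A distinct diff_zero in \<open>auto simp: A_eq\<close>)
  then show ?thesis using carrier xyz by (simp add: r_right_minus_eq)
qed

locale toc_construction = field F for F (structure) +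
  fixes g n :: nat and sig :: "nat \<Rightarrow> 'a"
  assumes sig_bij: "bij_betw sig {0..<g} (carrier F)"
    and three_le_n: "3 \<le> n" and n_le_g: "n \<le> g"
begin

abbreviation coeffs :: "('a \<times> 'a \<times> 'a) set" where
  "coeffs \<equiv> carrier F \<times> carrier F \<times> carrier F"

definition supports :: "nat set set" where
  "supports = {T. T \<subseteq> {0..<n} \<and> card T = 3}"

definition letter :: "'a \<Rightarrow> nat" where
  "letter a = Suc (the_inv_into {0..<g} sig a)"

definition entry :: "'a \<times> 'a \<times> 'a \<Rightarrow> nat set \<Rightarrow> nat \<Rightarrow> 'a" where
  "entry c T i = quad_eval c (sig i) \<oplus> sig ((\<Sum>T - i) mod g)"

definition word :: "'a \<times> 'a \<times> 'a \<Rightarrow> nat set \<Rightarrow> nat \<Rightarrow> nat" where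
  "word c T = (\<lambda>i. if i \<in> T then letter (entry c T i) else 0)"

definition code :: "'a \<times> 'a \<times> 'a \<Rightarrow> (nat \<Rightarrow> nat) set" where
  "code c = word c ` supports"

lemma sig_in_carrier: "m < g \<Longrightarrow> sig m \<in> carrier F"
  using sig_bij by (auto simp: bij_betw_def)

lemma sig_eq_iff: "m < g \<Longrightarrow> m' < g \<Longrightarrow> sig m = sig m' \<longleftrightarrow> m = m'"
  using sig_bij by (auto simp: bij_betw_def inj_on_def)

lemma letter_sig: "m < g \<Longrightarrow> letter (sig m) = Suc m"
  using sig_bij unfolding letter_def bij_betw_def by (simp add: the_inv_into_f_f)

lemma letter_le: "a \<in> carrier F \<Longrightarrow> letter a \<le> g"
  using sig_bij unfolding letter_def bij_betw_def
  by (metis Suc_leI atLeastLessThan_iff subset_refl the_inv_into_into)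

lemma letter_eq_iff: "a \<in> carrier F \<Longrightarrow> b \<in> carrier F \<Longrightarrow> letter a = letter b \<longleftrightarrow> a = b"
  using sig_bij unfolding letter_def bij_betw_def by (metis Suc_inject f_the_inv_into_f)

lemma supports_lt: "T \<in> supports \<Longrightarrow> i \<in> T \<Longrightarrow> i < n"
  by (auto simp: supports_def)

lemma entry_carrier: "c \<in> coeffs \<Longrightarrow> i < g \<Longrightarrow> entry c T i \<in> carrier F"
  using n_le_g sig_in_carrier by (auto simp: entry_def quad_eval_def)

lemma word_support_word: "T \<in> supports \<Longrightarrow> word_support n (word c T) = T"
  by (auto simp: word_support_def word_def supports_def letter_def)

lemma word_in_Hq:
  assumes c: "c \<in> coeffs" and T: "T \<in> supports"
  shows "word c T \<in> Hq (g + 1) n 3"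
proof -
  have "word c T i < g + 1" for i
  proof (cases "i \<in> T")
    case True
    then have "i < g" using supports_lt[OF T] n_le_g by force
    then show ?thesis using True letter_le[OF entry_carrier[OF c]] by (simp add: word_def less_Suc_eq_le)
  qed (simp add: word_def)
  moreover have "word c T i = 0" if "n \<le> i" for i
    using that supports_lt[OF T] by (force simp: word_def)
  moreover have "card (word_support n (word c T)) = 3"
    using T by (simp add: word_support_word supports_def)
  ultimately show ?thesis by (simp add: Hq_def word_support_def)
qed

lemma entries_inj:
  assumes T: "T \<in> supports" and c: "c \<in> coeffs" and c': "c' \<in> coeffs"
    and eq: "\<And>i. i \<in> T \<Longrightarrow> entry c T i = entry c' T i"
  shows "c = c'"
proof (rule quad_eval_inj[OF c c'])
  have T_lt: "i < g" if "i \<in> T" for i using supports_lt[OF T that] n_le_g by simp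
  show "sig ` T \<subseteq> carrier F" using T_lt sig_in_carrier by auto
  have "inj_on sig T" using T_lt sig_eq_iff by (auto intro: inj_onI)
  then show "card (sig ` T) = 3" using T by (simp add: card_image supports_def)
  show "quad_eval c a = quad_eval c' a" if "a \<in> sig ` T" for a
  proof -
    obtain i where i: "i \<in> T" "a = sig i" using \<open>a \<in> sig ` T\<close> by auto
    have "sig ((\<Sum>T - i) mod g) \<in> carrier F"
      using T_lt[OF i(1)] sig_in_carrier by simp
    then show ?thesis
      using eq[OF i(1)] c c' sig_in_carrier[OF T_lt[OF i(1)]] i(2)
      by (auto simp: entry_def quad_eval_def)
  qed
qed

lemma word_inj:
  assumes c: "c \<in> coeffs" and c': "c' \<in> coeffs" and T: "T \<in> supports" and T': "T' \<in> supports"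
    and eq: "word c T = word c' T'"
  shows "c = c' \<and> T = T'"
proof -
  have "T = T'" using word_support_word[OF T, of c] word_support_word[OF T', of c'] eq by simp
  moreover have "entry c T i = entry c' T i" if "i \<in> T" for i
  proof -
    have "i < g" using supports_lt[OF T that] n_le_g by simp
    then show ?thesis
      using fun_cong[OF eq, of i] that \<open>T = T'\<close> letter_eq_iff entry_carrier c c'
      by (auto simp: word_def)
  qed
  ultimately show ?thesis using entries_inj[OF T c c'] by simp
qed

lemma entries_surj:
  assumes T: "T \<in> supports" and v: "v \<in> T \<rightarrow>\<^sub>E carrier F"
  shows "\<exists>c\<in>coeffs. \<forall>i\<in>T. entry c T i = v i"
proof -
  define entries where "entries c = restrict (entry c T) T" for c
  have T_lt: "i < g" if "i \<in> T" for i using supports_lt[OF T that] n_le_g by simp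
  have fin_T: "finite T" using T by (auto simp: supports_def intro: finite_subset)
  have fin_F: "finite (carrier F)" using sig_bij bij_betw_finite by blast
  have card_F: "card (carrier F) = g" using sig_bij by (simp add: bij_betw_same_card[symmetric])
  have inj: "inj_on entries coeffs"
  proof (rule inj_onI)
    fix c c' assume c: "c \<in> coeffs" and c': "c' \<in> coeffs" and eq: "entries c = entries c'"
    show "c = c'"
    proof (rule entries_inj[OF T c c'])
      show "entry c T i = entry c' T i" if "i \<in> T" for i
        using fun_cong[OF eq, of i] that by (simp add: entries_def)
    qed
  qed
  have sub: "entries ` coeffs \<subseteq> T \<rightarrow>\<^sub>E carrier F"
    using entry_carrier T_lt by (auto simp: entries_def)
  have "card (entries ` coeffs) = g ^ 3"
    using card_image[OF inj] card_F by (simp add: card_cartesian_product power3_eq_cube)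
  moreover have "card (T \<rightarrow>\<^sub>E carrier F) = g ^ 3"
    using card_PiE[OF fin_T, of "\<lambda>_. carrier F"] card_F T by (simp add: supports_def)
  ultimately have "entries ` coeffs = T \<rightarrow>\<^sub>E carrier F"
    using card_subset_eq[OF finite_PiE[OF fin_T] sub] fin_F by simp
  then obtain c where c: "c \<in> coeffs" and v_eq: "v = entries c" using v by blast
  have "entry c T i = v i" if "i \<in> T" for i using that by (simp add: v_eq entries_def)
  then show ?thesis using c by blast
qed

lemma word_surj:
  assumes w: "w \<in> Hq (g + 1) n 3"
  shows "\<exists>c\<in>coeffs. \<exists>T\<in>supports. w = word c T"
proof -
  define T where "T = word_support n w"
  have T: "T \<in> supports"
    using w word_support_subset card_word_support by (auto simp: T_def supports_def)
  have letter: "0 < w i \<and> w i - 1 < g" if "i \<in> T" for i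
    using that w by (auto simp: T_def word_support_def Hq_def)
  obtain c where c: "c \<in> coeffs" and entries: "\<forall>i\<in>T. entry c T i = sig (w i - 1)"
    using entries_surj[OF T, of "restrict (\<lambda>i. sig (w i - 1)) T"] letter sig_in_carrier by auto
  have "w = word c T"
  proof
    fix i
    show "w i = word c T i"
    proof (cases "i \<in> T")
      case True
      then show ?thesis using entries letter[OF True] by (simp add: word_def letter_sig)
    next
      case False
      then show ?thesis using w by (cases "i < n") (auto simp: word_def T_def word_support_def Hq_def)
    qed
  qed
  then show ?thesis using c T by blast
qed

lemma entry_shift_distinct:
  assumes c: "c \<in> coeffs" and T: "T \<in> supports" and T': "T' \<in> supports"
    and two: "card (T \<inter> T') = 2" and i: "i \<in> T \<inter> T'"
  shows "entry c T i \<noteq> entry c T' i"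
proof
  assume eq: "entry c T i = entry c T' i"
  have fin: "finite T" "finite T'" using T T' by (auto simp: supports_def intro: finite_subset)
  have "card (T - T') = 1" "card (T' - T) = 1"
    using card_Diff_subset_Int[of T T'] card_Diff_subset_Int[of T' T] fin two T T'
    by (simp_all add: supports_def Int_commute)
  then obtain k k' where k: "T - T' = {k}" and k': "T' - T = {k'}"
    by (auto simp: card_1_singleton_iff)
  define B where "B = T \<inter> T'"
  define m where "m = \<Sum>B - i"
  have "i \<le> \<Sum>B" using fin i member_le_sum[of i B "\<lambda>x. x"] by (simp add: B_def)
  have "T = insert k B" "k \<notin> B" "T' = insert k' B" "k' \<notin> B" using k k' by (auto simp: B_def)
  then have sums: "\<Sum>T - i = m + k" "\<Sum>T' - i = m + k'"
    using fin \<open>i \<le> \<Sum>B\<close> by (simp_all add: m_def)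
  have "k \<in> T" "k' \<in> T'" using k k' by auto
  then have lt: "i < g" "k < g" "k' < g"
    using i supports_lt[OF T, of i] supports_lt[OF T, of k] supports_lt[OF T', of k'] n_le_g by auto
  have "quad_eval c (sig i) \<in> carrier F"
    using c sig_in_carrier[OF lt(1)] by (auto simp: quad_eval_def)
  then have "sig ((m + k) mod g) = sig ((m + k') mod g)"
    using eq sig_in_carrier lt by (simp add: entry_def sums)
  then have "[m + k = m + k'] (mod g)"
    using lt by (simp add: sig_eq_iff cong_def)
  then have "[k = k'] (mod g)" by (simp only: cong_add_lcancel_nat)
  then have "k = k'" using lt by (simp add: cong_def)
  then show False using k k' by auto
qed

lemma hdist_word_ge_4:
  assumes c: "c \<in> coeffs" and T: "T \<in> supports" and T': "T' \<in> supports" and ne: "T \<noteq> T'"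
  shows "4 \<le> hdist n (word c T) (word c T')"
proof (rule hdist_weight_3_ge_4[OF word_in_Hq[OF c T] word_in_Hq[OF c T']])
  show "word_support n (word c T) \<noteq> word_support n (word c T')"
    using ne by (simp add: word_support_word T T')
  assume "card (word_support n (word c T) \<inter> word_support n (word c T')) = 2"
  then have two: "card (T \<inter> T') = 2" by (simp add: word_support_word T T')
  show "\<forall>i \<in> word_support n (word c T) \<inter> word_support n (word c T'). word c T i \<noteq> word c T' i"
  proof
    fix i assume "i \<in> word_support n (word c T) \<inter> word_support n (word c T')"
    then have i: "i \<in> T \<inter> T'" by (simp add: word_support_word T T')
    then have "i < g" using supports_lt[OF T] n_le_g by force
    then show "word c T i \<noteq> word c T' i"
      using entry_shift_distinct[OF c T T' two i] i entry_carrier[OF c] letter_eq_iff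
      by (simp add: word_def)
  qed
qed

lemma supports_nonempty: "supports \<noteq> {}"
proof -
  have "{0, 1, 2} \<in> supports" using three_le_n by (auto simp: supports_def)
  then show ?thesis by auto
qed

lemma code_is_code:
  assumes c: "c \<in> coeffs"
  shows "is_code (g + 1) n 4 3 (code c)"
  unfolding is_code_def code_def
proof (intro conjI ballI impI)
  show "word c ` supports \<noteq> {}" using supports_nonempty by simp
  show "word c ` supports \<subseteq> Hq (g + 1) n 3" using word_in_Hq[OF c] by blast
  fix x y assume "x \<in> word c ` supports" "y \<in> word c ` supports" "x \<noteq> y"
  then show "4 \<le> hdist n x y" using hdist_word_ge_4[OF c] by blast
qed

lemma card_code:
  assumes c: "c \<in> coeffs"
  shows "card (code c) = n choose 3"
proof -
  have "inj_on (word c) supports" by (rule inj_onI) (use word_inj[OF c c] in blast)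
  then show ?thesis by (simp add: code_def card_image supports_def card_subsets_atLeastLessThan)
qed

lemma partition_codes: "partition_on (Hq (g + 1) n 3) (code ` coeffs)"
proof (rule partition_onI)
  show "\<Union> (code ` coeffs) = Hq (g + 1) n 3"
  proof
    show "\<Union> (code ` coeffs) \<subseteq> Hq (g + 1) n 3"
    proof (rule Union_least)
      fix C assume "C \<in> code ` coeffs"
      then obtain c where "c \<in> coeffs" "C = code c" by (rule imageE)
      then show "C \<subseteq> Hq (g + 1) n 3" using code_is_code by (simp add: is_code_def)
    qed
    show "Hq (g + 1) n 3 \<subseteq> \<Union> (code ` coeffs)"
    proof
      fix w assume "w \<in> Hq (g + 1) n 3"
      from word_surj[OF this] obtain c where c: "c \<in> coeffs" and "\<exists>T\<in>supports. w = word c T" ..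
      from this(2) obtain T where "T \<in> supports" "w = word c T" ..
      then have "w \<in> code c" by (simp add: code_def)
      then show "w \<in> \<Union> (code ` coeffs)" by (rule UN_I[OF c])
    qed
  qed
  fix C C' assume C: "C \<in> code ` coeffs" and C': "C' \<in> code ` coeffs" and ne: "C \<noteq> C'"
  from C obtain c where c: "c \<in> coeffs" "C = code c" by (rule imageE)
  from C' obtain c' where c': "c' \<in> coeffs" "C' = code c'" by (rule imageE)
  show "disjnt C C'"
    unfolding disjnt_def
  proof (rule ccontr)
    assume "C \<inter> C' \<noteq> {}"
    then obtain w where "w \<in> code c" "w \<in> code c'" using c c' by auto
    then obtain T T' where "T \<in> supports" "T' \<in> supports" "w = word c T" "w = word c' T'"
      unfolding code_def by (elim imageE)
    then have "c = c'" using word_inj[OF c(1) c'(1)] by simp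
    then show False using c c' ne by simp
  qed
next
  show "{} \<notin> code ` coeffs"
  proof
    assume "{} \<in> code ` coeffs"
    then obtain c where "{} = code c" by (rule imageE)
    then show False using supports_nonempty by (simp add: code_def)
  qed
qed

lemma toc_exists: "\<exists>P. TOC (g + 1) n 4 3 P"
proof
  show "TOC (g + 1) n 4 3 (code ` coeffs)"
  proof (rule TOC_if_codes_of_card_choose[OF partition_codes])
    fix C assume "C \<in> code ` coeffs"
    then obtain c where "c \<in> coeffs" "C = code c" by (rule imageE)
    then show "is_code (g + 1) n 4 3 C \<and> card C = n choose 3"
      using code_is_code[of c] card_code[of c] by simp
  qed simp
qed

end

theorem theorem4p9:
  fixes n g :: nat
  assumes "n \<ge> 3" and "primepow g"
    and "even g \<Longrightarrow> g \<ge> n" and "odd g \<Longrightarrow> g \<ge> n + 1"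
  shows "\<exists>P. TOC (g + 1) n 4 3 P"
proof -
  obtain p k where p: "Factorial_Ring.prime p" and k: "0 < k" and g: "g = p ^ k"
    using assms(2) by (auto simp: primepow_def)
  obtain F :: "((int list \<times> nat) multiset \<Rightarrow> int) ring"
    where F: "field F" and card_F: "card (carrier F) = g"
    using finite_field_exists[OF p k] g by blast
  have "0 < g" using g p prime_gt_0_nat by simp
  then have "finite (carrier F)" using card_F card_ge_0_finite by metis
  then obtain sig where "bij_betw sig {0..<g} (carrier F)"
    using ex_bij_betw_nat_finite card_F by metis
  \<comment> \<open>The construction only needs \<open>n \<le> g\<close>.\<close>
  moreover have "n \<le> g" using assms(3,4) by (cases "even g") auto
  ultimately interpret toc_construction F g n sig
    using F assms(1) by (simp add: toc_construction_def toc_construction_axioms_def)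
  show ?thesis by (rule toc_exists)
qed

end
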